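(* There is a function $\eta(n)\to 0$ (as $n\to\infty$) such that every Steiner triple system $S$ of order $n$ has at most \[ \left((1+\eta(n))\frac{n}{2e^{2}}\right)^{n/3} \] perfect matchings.
   Context: A Steiner triple system of order $n$ is a 3-uniform hypergraph on the vertex set $[n]$ such that every pair of vertices is contained in exactly one hyperedge. A perfect matching is a set of pairwise disjoint hyperedges covering all vertices. *)

theory Defs
  imports Complex_Main
begin

definition steiner_triple_system :: "nat \<Rightarrow> nat set set \<Rightarrow> bool" where
  "steiner_triple_system n S \<longleftrightarrow>
     (\<forall>e\<in>S. e \<subseteq> {1..n} \<and> card e = 3) \<and>
     (\<forall>x\<in>{1..n}. \<forall>y\<in>{1..n}. x \<noteq> y \<longrightarrow> (\<exists>!e. e \<in> S \<and> {x, y} \<subseteq> e))"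

definition perfect_matching :: "'a set \<Rightarrow> 'a set set \<Rightarrow> 'a set set \<Rightarrow> bool" where
  "perfect_matching V S M \<longleftrightarrow>
     M \<subseteq> S \<and> (\<forall>e\<in>M. \<forall>f\<in>M. e \<noteq> f \<longrightarrow> e \<inter> f = {}) \<and> \<Union>M = V"

end

(* Entropy method in counting form.  Let PM be the set of perfect matchings.  Reveal the triples of
   M in PM vertex by vertex, in the order of independent uniform random times t(v).  The chain rule
   bounds ln |PM| by the average over M of the sum over v of the logarithm of the number of triples
   at v still consistent with what has been revealed.  That number is 1 unless v comes first in its
   triple of M; then it is at most 1 plus the number of triples T at v none of whose six blockers
   (the other vertices of the M-triples through the two further points of T) has been revealed.
   For t(v) = x, v comes first with probability (1 - x)^2, and by Jensen's inequality the term is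
   then at most ln (1 + (n/2) (1 - x)^6).  Hence
     ln |PM| <= n * integral_0^1 (1 - x)^2 ln (1 + (n/2) (1 - x)^6) dx = (n/3) (ln (n/2) - 2 + o(1)).
   The times are discretised to {0, ..., K - 1} with ties broken by the vertex label, and K = n. *)

theory Submission
  imports Defs "HOL-Library.FuncSet" "HOL-Real_Asymp.Real_Asymp"
begin

section \<open>The entropy chain rule in counting form\<close>

lemma sum_inverse_card_fibres:
  fixes h :: "'a \<Rightarrow> 'b"
  assumes "finite C"
  shows "(\<Sum>a\<in>C. 1 / real (card {b\<in>C. h b = h a})) = real (card (h ` C))"
proof -
  have "(\<Sum>a\<in>C. 1 / real (card {b\<in>C. h b = h a}))
      = (\<Sum>y\<in>h ` C. \<Sum>a\<in>{x\<in>C. h x = y}. 1 / real (card {b\<in>C. h b = h a}))"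
    by (rule sum.image_gen[OF assms])
  also have "\<dots> = (\<Sum>y\<in>h ` C. 1)"
  proof (rule sum.cong[OF refl])
    fix y assume "y \<in> h ` C"
    then have "{x\<in>C. h x = y} \<noteq> {}" by auto
    moreover have "(\<Sum>a\<in>{x\<in>C. h x = y}. 1 / real (card {b\<in>C. h b = h a}))
        = (\<Sum>a\<in>{x\<in>C. h x = y}. 1 / real (card {x\<in>C. h x = y}))"
      by (rule sum.cong) auto
    ultimately show "(\<Sum>a\<in>{x\<in>C. h x = y}. 1 / real (card {b\<in>C. h b = h a})) = 1"
      using assms by simp
  qed
  finally show ?thesis by simp
qed

lemma sum_over_classes:
  assumes fin: "finite A"
    and P_in: "\<And>a. a \<in> A \<Longrightarrow> a \<in> P a \<and> P a \<subseteq> A"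
    and P_eq: "\<And>a b. a \<in> A \<Longrightarrow> b \<in> P a \<Longrightarrow> P b = P a"
  shows "(\<Sum>a\<in>A. f (P a) a) = (\<Sum>C\<in>P ` A. \<Sum>a\<in>C. f C a)"
proof -
  have class_eq: "{x\<in>A. P x = C} = C" if "C \<in> P ` A" for C
    using that P_in P_eq by blast
  have "(\<Sum>a\<in>A. f (P a) a) = (\<Sum>C\<in>P ` A. \<Sum>a\<in>{x\<in>A. P x = C}. f (P a) a)"
    by (rule sum.image_gen[OF fin])
  also have "\<dots> = (\<Sum>C\<in>P ` A. \<Sum>a\<in>{x\<in>A. P x = C}. f C a)"
    by (intro sum.cong refl) auto
  also have "\<dots> = (\<Sum>C\<in>P ` A. \<Sum>a\<in>C. f C a)"
    by (rule sum.cong[OF refl]) (simp add: class_eq)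
  finally show ?thesis .
qed

text \<open>The counting form of the bound \<open>H(h | P) \<le> E log |range of h on the class|\<close> for a
  partition \<open>P\<close> of \<open>A\<close> and the uniform distribution on \<open>A\<close>.\<close>

lemma sum_ln_card_ratio_le_sum_ln_card_image:
  fixes h :: "'a \<Rightarrow> 'b"
  assumes fin: "finite A"
    and P_in: "\<And>a. a \<in> A \<Longrightarrow> a \<in> P a \<and> P a \<subseteq> A"
    and P_eq: "\<And>a b. a \<in> A \<Longrightarrow> b \<in> P a \<Longrightarrow> P b = P a"
  shows "(\<Sum>a\<in>A. ln (real (card (P a)) / real (card {b\<in>P a. h b = h a})))
       \<le> (\<Sum>a\<in>A. ln (real (card (h ` P a))))"
proof -
  have finP: "finite (P a)" if "a \<in> A" for a
    using P_in[OF that] fin finite_subset by blast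
  define w where "w C a = real (card C) / (real (card {b\<in>C. h b = h a}) * real (card (h ` C)))"
    for C a
  have pos: "real (card {b\<in>P a. h b = h a}) > 0" "real (card (h ` P a)) > 0" "real (card (P a)) > 0"
    if "a \<in> A" for a
    using P_in[OF that] finP[OF that] by (auto simp: card_gt_0_iff)
  have ln_le: "ln (real (card (P a)) / real (card {b\<in>P a. h b = h a})) - ln (real (card (h ` P a)))
      \<le> w (P a) a - 1" if "a \<in> A" for a
  proof -
    have "ln (real (card (P a)) / real (card {b\<in>P a. h b = h a})) - ln (real (card (h ` P a)))
        = ln (w (P a) a)"
      unfolding w_def using pos[OF that] by (simp add: ln_div ln_mult)
    also have "\<dots> \<le> w (P a) a - 1"
      using pos[OF that] unfolding w_def by (intro ln_le_minus_one) simp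
    finally show ?thesis .
  qed
  have class_weight: "(\<Sum>a\<in>C. w C a) = real (card C)" if "C \<in> P ` A" for C
  proof -
    have "h ` C \<noteq> {}" "finite C" using that P_in finP by auto
    have "(\<Sum>a\<in>C. w C a)
        = real (card C) / real (card (h ` C)) * (\<Sum>a\<in>C. 1 / real (card {b\<in>C. h b = h a}))"
      unfolding w_def sum_distrib_left by (intro sum.cong refl) simp
    also have "\<dots> = real (card C)"
      using sum_inverse_card_fibres[OF \<open>finite C\<close>, of h] \<open>h ` C \<noteq> {}\<close> \<open>finite C\<close> by simp
    finally show ?thesis .
  qed
  have "(\<Sum>a\<in>A. w (P a) a) = (\<Sum>C\<in>P ` A. \<Sum>a\<in>C. 1)"
    using sum_over_classes[OF fin P_in P_eq, of w] class_weight by simp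
  also have "\<dots> = real (card A)"
    using sum_over_classes[OF fin P_in P_eq, of "\<lambda>_ _. 1::real"] by simp
  finally have sum_w: "(\<Sum>a\<in>A. w (P a) a) = real (card A)" .
  have "(\<Sum>a\<in>A. ln (real (card (P a)) / real (card {b\<in>P a. h b = h a})) - ln (real (card (h ` P a))))
      \<le> (\<Sum>a\<in>A. w (P a) a - 1)"
    by (rule sum_mono) (rule ln_le)
  also have "\<dots> = 0" using sum_w by (simp add: sum_subtractf)
  finally show ?thesis by (simp add: sum_subtractf)
qed

definition agree_on :: "'i set \<Rightarrow> ('i \<Rightarrow> 'a \<Rightarrow> 'b) \<Rightarrow> 'a set \<Rightarrow> 'a \<Rightarrow> 'a set" where
  "agree_on I g A a = {b\<in>A. \<forall>i\<in>I. g i b = g i a}"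

lemma agree_on_class:
  assumes "a \<in> A"
  shows "a \<in> agree_on I g A a \<and> agree_on I g A a \<subseteq> A"
    and "b \<in> agree_on I g A a \<Longrightarrow> agree_on I g A b = agree_on I g A a"
  using assms unfolding agree_on_def by auto

lemma sum_ln_card_agree_on_insert:
  assumes finA: "finite A"
  shows "(\<Sum>a\<in>A. ln (real (card A) / real (card (agree_on (insert x I) g A a))))
      \<le> (\<Sum>a\<in>A. ln (real (card A) / real (card (agree_on I g A a))))
        + (\<Sum>a\<in>A. ln (real (card (g x ` agree_on I g A a))))"
proof -
  have refine: "agree_on (insert x I) g A a = {b\<in>agree_on I g A a. g x b = g x a}" for a
    unfolding agree_on_def by auto
  have pos: "real (card {b\<in>agree_on I g A a. g x b = g x a}) > 0" "real (card (agree_on I g A a)) > 0"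
    "real (card A) > 0" if "a \<in> A" for a
  proof -
    have "finite (agree_on I g A a)" using agree_on_class(1)[OF that] finA finite_subset by blast
    then show "real (card {b\<in>agree_on I g A a. g x b = g x a}) > 0"
      "real (card (agree_on I g A a)) > 0" "real (card A) > 0"
      using agree_on_class(1)[OF that, of I g] that finA by (auto simp: card_gt_0_iff)
  qed
  have "(\<Sum>a\<in>A. ln (real (card A) / real (card (agree_on (insert x I) g A a))))
      = (\<Sum>a\<in>A. ln (real (card A) / real (card (agree_on I g A a))))
        + (\<Sum>a\<in>A. ln (real (card (agree_on I g A a)) / real (card {b\<in>agree_on I g A a. g x b = g x a})))"
  proof -
    have "ln (real (card A) / real (card (agree_on (insert x I) g A a)))
        = ln (real (card A) / real (card (agree_on I g A a)))
          + ln (real (card (agree_on I g A a)) / real (card {b\<in>agree_on I g A a. g x b = g x a}))"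
      if "a \<in> A" for a
      unfolding refine using pos[OF that] by (simp add: ln_div)
    then show ?thesis by (simp add: sum.distrib)
  qed
  also have "\<dots> \<le> (\<Sum>a\<in>A. ln (real (card A) / real (card (agree_on I g A a))))
        + (\<Sum>a\<in>A. ln (real (card (g x ` agree_on I g A a))))"
    using sum_ln_card_ratio_le_sum_ln_card_image[OF finA agree_on_class] by simp
  finally show ?thesis .
qed

text \<open>Revealing the coordinates \<open>g i\<close> in the order given by \<open>\<kappa>\<close>: the entropy of the uniform
  distribution on \<open>A\<close> is at most the expected sum of the logarithms of the numbers of values each
  coordinate can still take.\<close>

lemma sum_ln_card_agree_on_le:
  fixes \<kappa> :: "'i \<Rightarrow> 'k::linorder"
  assumes finA: "finite A" and finI: "finite I" and inj: "inj_on \<kappa> I"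
  shows "(\<Sum>a\<in>A. ln (real (card A) / real (card (agree_on I g A a))))
      \<le> (\<Sum>a\<in>A. \<Sum>i\<in>I. ln (real (card (g i ` agree_on {j\<in>I. \<kappa> j < \<kappa> i} g A a))))"
  using finI inj
proof (induction I rule: finite_ranking_induct[where f = \<kappa>])
  case empty
  have "agree_on {} g A a = A" for a unfolding agree_on_def by auto
  then show ?case using finA by (simp add: card_gt_0_iff)
next
  case (insert x I)
  show ?case
  proof (cases "x \<in> I")
    case True
    then show ?thesis using insert by (simp add: insert_absorb)
  next
    case False
    have inj_I: "inj_on \<kappa> I" using insert.prems by (rule inj_on_subset) auto
    have "\<kappa> j \<noteq> \<kappa> x" if "j \<in> I" for j
      using inj_onD[OF insert.prems, of j x] that False by auto
    then have before_x: "{j \<in> insert x I. \<kappa> j < \<kappa> x} = I"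
      using insert.hyps(2) by (auto simp: order.strict_iff_order)
    have before_i: "{j \<in> insert x I. \<kappa> j < \<kappa> i} = {j \<in> I. \<kappa> j < \<kappa> i}" if "i \<in> I" for i
      using insert.hyps(2)[OF that] by auto
    have split: "(\<Sum>i\<in>insert x I. ln (real (card (g i ` agree_on {j\<in>insert x I. \<kappa> j < \<kappa> i} g A a))))
        = (\<Sum>i\<in>I. ln (real (card (g i ` agree_on {j\<in>I. \<kappa> j < \<kappa> i} g A a))))
          + ln (real (card (g x ` agree_on I g A a)))" for a
    proof -
      have "(\<Sum>i\<in>I. ln (real (card (g i ` agree_on {j\<in>insert x I. \<kappa> j < \<kappa> i} g A a))))
          = (\<Sum>i\<in>I. ln (real (card (g i ` agree_on {j\<in>I. \<kappa> j < \<kappa> i} g A a))))"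
        by (rule sum.cong[OF refl]) (simp only: before_i)
      then show ?thesis
        unfolding sum.insert[OF insert.hyps(1) False] before_x by linarith
    qed
    show ?thesis
      using sum_ln_card_agree_on_insert[OF finA, of x I g] insert.IH[OF inj_I]
      unfolding split sum.distrib by linarith
  qed
qed

corollary card_mul_ln_card_le_sum_ln_card_agree_on:
  fixes \<kappa> :: "'i \<Rightarrow> 'k::linorder"
  assumes finA: "finite A" and finI: "finite I" and inj: "inj_on \<kappa> I"
    and separating: "\<And>a b. a \<in> A \<Longrightarrow> b \<in> A \<Longrightarrow> (\<forall>i\<in>I. g i b = g i a) \<Longrightarrow> b = a"
  shows "real (card A) * ln (real (card A))
      \<le> (\<Sum>a\<in>A. \<Sum>i\<in>I. ln (real (card (g i ` agree_on {j\<in>I. \<kappa> j < \<kappa> i} g A a))))"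
proof -
  have "agree_on I g A a = {a}" if "a \<in> A" for a
    using that separating unfolding agree_on_def by blast
  then have "(\<Sum>a\<in>A. ln (real (card A) / real (card (agree_on I g A a))))
      = real (card A) * ln (real (card A))"
    by simp
  then show ?thesis using sum_ln_card_agree_on_le[OF finA finI inj, of g] by simp
qed

lemma sum_ln_le_card_mul_ln_mean:
  assumes fin: "finite G" and pos: "\<forall>t\<in>G. f t > 0" and m: "m > 0"
    and sum_le: "(\<Sum>t\<in>G. f t) \<le> real (card G) * m"
  shows "(\<Sum>t\<in>G. ln (f t)) \<le> real (card G) * ln m"
proof -
  have "ln (f t) \<le> ln m + f t / m - 1" if "t \<in> G" for t
    using ln_le_minus_one[of "f t / m"] ln_divide_pos[of "f t" m] pos that m by simp
  then have "(\<Sum>t\<in>G. ln (f t)) \<le> (\<Sum>t\<in>G. ln m + f t / m - 1)" by (rule sum_mono)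
  also have "\<dots> = real (card G) * ln m + (\<Sum>t\<in>G. f t) / m - real (card G)"
    by (simp add: sum.distrib sum_subtractf sum_divide_distrib)
  also have "\<dots> \<le> real (card G) * ln m" using sum_le m by (simp add: field_simps)
  finally show ?thesis .
qed

lemma card_PiE_filter_ge:
  fixes K :: nat and F :: "'a \<Rightarrow> nat set"
  assumes fin: "finite V" and WV: "W \<subseteq> V" and FW: "\<forall>x\<in>W. F x = {0..<K}"
    and aK: "\<alpha> \<le> K" and K: "0 < K"
  shows "real (card {t\<in>PiE V F. \<forall>w\<in>W. \<alpha> \<le> t w})
       = real (card (PiE V F)) * (real (K - \<alpha>) / real K) ^ card W"
proof -
  have finW: "finite W" using fin WV finite_subset by blast
  define F' where "F' x = (if x \<in> W then {\<alpha>..<K} else F x)" for x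
  have filter: "{t\<in>PiE V F. \<forall>w\<in>W. \<alpha> \<le> t w} = PiE V F'"
    using WV FW by (fastforce simp: F'_def PiE_iff extensional_def split: if_splits)
  have "card (PiE V F) = (\<Prod>x\<in>V - W. card (F x)) * (\<Prod>x\<in>W. card (F x))"
    by (simp add: card_PiE[OF fin] prod.subset_diff[OF WV fin])
  also have "(\<Prod>x\<in>W. card (F x)) = K ^ card W" using FW by simp
  finally have all: "card (PiE V F) = (\<Prod>x\<in>V - W. card (F x)) * K ^ card W" .
  have "card (PiE V F') = (\<Prod>x\<in>V - W. card (F' x)) * (\<Prod>x\<in>W. card (F' x))"
    by (simp add: card_PiE[OF fin] prod.subset_diff[OF WV fin])
  also have "\<dots> = (\<Prod>x\<in>V - W. card (F x)) * (K - \<alpha>) ^ card W"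
    by (simp add: F'_def)
  finally have later: "card (PiE V F') = (\<Prod>x\<in>V - W. card (F x)) * (K - \<alpha>) ^ card W" .
  show ?thesis
    unfolding filter all later using K aK by (simp add: power_divide of_nat_diff)
qed

lemma mult_add_less_imp_le:
  fixes a b n x y :: nat
  assumes "x \<le> n" "y \<le> n" "a * (n + 1) + x < b * (n + 1) + y"
  shows "a \<le> b"
proof (rule ccontr)
  assume "\<not> a \<le> b"
  then have "(b + 1) * (n + 1) \<le> a * (n + 1)" by (intro mult_le_mono1) simp
  then show False using assms by simp
qed

lemma real_card_filter_eq_sum:
  "finite A \<Longrightarrow> real (card {x\<in>A. P x}) = (\<Sum>x\<in>A. if P x then 1 else 0)"
  by (simp add: sum.inter_filter[symmetric])

lemma ln_of_nat_mono: "x \<le> y \<Longrightarrow> ln (real x) \<le> ln (real y)"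
  by (cases "x = 0"; cases "y = 0") (auto intro: ln_mono)

section \<open>Steiner triple systems and their perfect matchings\<close>

definition triple_of :: "'a set set \<Rightarrow> 'a \<Rightarrow> 'a set" where
  "triple_of M u = (THE T. T \<in> M \<and> u \<in> T)"

locale sts =
  fixes n :: nat and S :: "nat set set"
  assumes sts: "steiner_triple_system n S"
begin

lemma triple_subset: "T \<in> S \<Longrightarrow> T \<subseteq> {1..n}"
  and card_triple: "T \<in> S \<Longrightarrow> card T = 3"
  using sts unfolding steiner_triple_system_def by auto

lemma triple_eqI:
  assumes "T1 \<in> S" "T2 \<in> S" "x \<in> T1" "y \<in> T1" "x \<in> T2" "y \<in> T2" "x \<noteq> y"
  shows "T1 = T2"
proof -
  have "x \<in> {1..n}" "y \<in> {1..n}" using triple_subset[OF assms(1)] assms(3,4) by blast+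
  moreover have "\<forall>x\<in>{1..n}. \<forall>y\<in>{1..n}. x \<noteq> y \<longrightarrow> (\<exists>!e. e \<in> S \<and> {x, y} \<subseteq> e)"
    using sts unfolding steiner_triple_system_def by (elim conjE)
  ultimately have "\<exists>!e. e \<in> S \<and> {x, y} \<subseteq> e" using assms(7) by blast
  moreover have "T1 \<in> S \<and> {x, y} \<subseteq> T1" "T2 \<in> S \<and> {x, y} \<subseteq> T2"
    using assms(1-6) by auto
  ultimately show ?thesis by (metis (no_types, lifting))
qed

lemma finite_S: "finite S"
  using finite_subset[of S "Pow {1..n}"] triple_subset by auto

lemma triple_obtain:
  assumes "T \<in> S" "v \<in> T"
  obtains x y where "T = {v, x, y}" "x \<noteq> v" "y \<noteq> v" "x \<noteq> y"
proof -
  obtain a b c where "T = {a, b, c}" "a \<noteq> b" "a \<noteq> c" "b \<noteq> c"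
    using card_triple[OF assms(1)] by (auto simp: card_3_iff)
  then show ?thesis using that assms(2) by (metis insert_commute insert_iff singletonD)
qed

lemma degree_le:
  assumes "v \<in> {1..n}"
  shows "2 * card {T\<in>S. v \<in> T} + 1 \<le> n"
proof -
  let ?Sv = "{T\<in>S. v \<in> T}"
  have fin: "finite ?Sv" using finite_S by simp
  have finite_T: "finite (T - {v})" if "T \<in> ?Sv" for T
    using that triple_subset finite_subset by blast
  have card_T: "card (T - {v}) = 2" if "T \<in> ?Sv" for T
    using that card_triple finite_T[OF that] by (simp add: card_Diff_singleton)
  have disjoint: "(T1 - {v}) \<inter> (T2 - {v}) = {}" if "T1 \<in> ?Sv" "T2 \<in> ?Sv" "T1 \<noteq> T2" for T1 T2
    using that triple_eqI[of T1 T2 v] by blast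
  have "card (\<Union>T\<in>?Sv. T - {v}) = (\<Sum>T\<in>?Sv. card (T - {v}))"
    by (rule card_UN_disjoint[OF fin]) (use finite_T disjoint in blast)+
  then have "2 * card ?Sv = card (\<Union>T\<in>?Sv. T - {v})"
    using card_T by simp
  also have "\<dots> \<le> card ({1..n} - {v})"
    using triple_subset by (intro card_mono) auto
  also have "\<dots> = n - 1" using assms by simp
  finally show ?thesis using assms by fastforce
qed

definition matchings :: "nat set set set" where
  "matchings = {M. perfect_matching {1..n} S M}"

lemma finite_matchings: "finite matchings"
  using finite_subset[of matchings "Pow S"] finite_S
  unfolding matchings_def perfect_matching_def by auto

lemma matching_subset: "M \<in> matchings \<Longrightarrow> M \<subseteq> S"
  unfolding matchings_def perfect_matching_def by blast

lemma matching_disjoint: "M \<in> matchings \<Longrightarrow> T1 \<in> M \<Longrightarrow> T2 \<in> M \<Longrightarrow> T1 \<noteq> T2 \<Longrightarrow> T1 \<inter> T2 = {}"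
  unfolding matchings_def perfect_matching_def by blast

lemma triple_of_unique:
  assumes M: "M \<in> matchings" and u: "u \<in> {1..n}"
  shows "triple_of M u \<in> M \<and> u \<in> triple_of M u"
    and "T \<in> M \<Longrightarrow> u \<in> T \<Longrightarrow> T = triple_of M u"
proof -
  obtain T0 where T0: "T0 \<in> M" "u \<in> T0"
    using M u unfolding matchings_def perfect_matching_def by blast
  have unique: "T = T0" if "T \<in> M" "u \<in> T" for T
    using matching_disjoint[OF M that(1) T0(1)] that(2) T0(2) by blast
  have "triple_of M u = T0"
    unfolding triple_of_def by (rule the_equality) (use T0 unique in blast)+
  then show "triple_of M u \<in> M \<and> u \<in> triple_of M u" "T \<in> M \<Longrightarrow> u \<in> T \<Longrightarrow> T = triple_of M u"
    using T0 unique by blast+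
qed

lemma triple_of_in: "M \<in> matchings \<Longrightarrow> u \<in> {1..n} \<Longrightarrow> triple_of M u \<in> M"
  and mem_triple_of: "M \<in> matchings \<Longrightarrow> u \<in> {1..n} \<Longrightarrow> u \<in> triple_of M u"
  using triple_of_unique(1) by blast+

lemma triple_of_in_S: "M \<in> matchings \<Longrightarrow> u \<in> {1..n} \<Longrightarrow> triple_of M u \<in> S"
  using triple_of_in matching_subset by blast

lemma triple_of_subset: "M \<in> matchings \<Longrightarrow> u \<in> {1..n} \<Longrightarrow> triple_of M u \<subseteq> {1..n}"
  using triple_of_in_S triple_subset by blast

lemma triple_of_eq:
  "M \<in> matchings \<Longrightarrow> u \<in> {1..n} \<Longrightarrow> w \<in> triple_of M u \<Longrightarrow> triple_of M w = triple_of M u"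
  by (metis triple_of_in triple_of_subset triple_of_unique(2) subsetD)

lemma matching_eq_if_triple_of_eq:
  assumes "M1 \<in> matchings" "M2 \<in> matchings" "\<forall>u\<in>{1..n}. triple_of M2 u = triple_of M1 u"
  shows "M2 = M1"
proof -
  have "M = triple_of M ` {1..n}" if M: "M \<in> matchings" for M
  proof
    show "triple_of M ` {1..n} \<subseteq> M" using triple_of_in[OF M] by auto
    show "M \<subseteq> triple_of M ` {1..n}"
    proof
      fix T assume "T \<in> M"
      then have "T \<in> S" using matching_subset M by auto
      then obtain x where "x \<in> T" using card_triple by fastforce
      then have "x \<in> {1..n}" using triple_subset[OF \<open>T \<in> S\<close>] by blast
      then show "T \<in> triple_of M ` {1..n}"
        using triple_of_unique(2)[OF M _ \<open>T \<in> M\<close> \<open>x \<in> T\<close>] by auto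
    qed
  qed
  then show ?thesis using assms by (metis image_cong)
qed

lemma triple_of_neq:
  assumes M: "M \<in> matchings" and T: "T \<in> S" "T \<notin> M" and xy: "x \<in> T" "y \<in> T" "x \<noteq> y"
  shows "triple_of M x \<noteq> triple_of M y"
proof
  assume eq: "triple_of M x = triple_of M y"
  have "x \<in> {1..n}" "y \<in> {1..n}" using triple_subset[OF T(1)] xy by auto
  then have "T = triple_of M x"
    using triple_eqI[OF T(1) triple_of_in_S[OF M], of x y] mem_triple_of[OF M] eq xy by metis
  then show False using T(2) triple_of_in[OF M \<open>x \<in> {1..n}\<close>] by simp
qed

text \<open>For a triple \<open>T\<close> at \<open>v\<close> outside \<open>M\<close>, the blockers are the vertices that \<open>M\<close> matches
  with the other two points of \<open>T\<close>: if one of them is revealed before \<open>v\<close>, then \<open>T\<close> is no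
  longer a possible value for the triple of \<open>v\<close>.\<close>

definition blockers :: "nat set set \<Rightarrow> nat \<Rightarrow> nat set \<Rightarrow> nat set" where
  "blockers M v T = (\<Union>x\<in>T. triple_of M x) - triple_of M v"

definition first_in_triple :: "(nat \<Rightarrow> 'k::linorder) \<Rightarrow> nat set set \<Rightarrow> nat \<Rightarrow> bool" where
  "first_in_triple \<kappa> M v \<longleftrightarrow> (\<forall>u\<in>triple_of M v. u \<noteq> v \<longrightarrow> \<kappa> v < \<kappa> u)"

definition available :: "(nat \<Rightarrow> 'k::linorder) \<Rightarrow> nat set set \<Rightarrow> nat \<Rightarrow> nat set set" where
  "available \<kappa> M v =
     {T\<in>S. v \<in> T \<and> T \<noteq> triple_of M v \<and> (\<forall>w\<in>blockers M v T. \<kappa> v < \<kappa> w)}"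

lemma blockers_props:
  assumes M: "M \<in> matchings" and v: "v \<in> {1..n}" and T: "T \<in> S" "v \<in> T" "T \<noteq> triple_of M v"
  shows "blockers M v T \<subseteq> {1..n}" "blockers M v T \<inter> triple_of M v = {}"
    and "6 \<le> card (blockers M v T)"
proof -
  show sub: "blockers M v T \<subseteq> {1..n}"
    unfolding blockers_def using triple_of_subset[OF M] triple_subset[OF T(1)] by blast
  show "blockers M v T \<inter> triple_of M v = {}" unfolding blockers_def by blast
  obtain x y where xy: "T = {v, x, y}" "x \<noteq> v" "y \<noteq> v" "x \<noteq> y"
    using triple_obtain T by blast
  have x: "x \<in> {1..n}" and y: "y \<in> {1..n}" using triple_subset[OF T(1)] xy by auto
  have "T \<notin> M" using T triple_of_unique(2)[OF M v] by blast
  then have distinct: "triple_of M x \<noteq> triple_of M v" "triple_of M y \<noteq> triple_of M v"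
      "triple_of M x \<noteq> triple_of M y"
    using triple_of_neq[OF M T(1)] xy by auto
  have disjoint: "triple_of M x \<inter> triple_of M v = {}" "triple_of M y \<inter> triple_of M v = {}"
      "triple_of M x \<inter> triple_of M y = {}"
    using matching_disjoint[OF M] triple_of_in[OF M] x y v distinct by blast+
  have "card (triple_of M x \<union> triple_of M y) = 6"
    using card_triple[OF triple_of_in_S[OF M x]] card_triple[OF triple_of_in_S[OF M y]]
      disjoint(3) by (simp add: card_Un_disjoint card_ge_0_finite)
  moreover have "triple_of M x \<union> triple_of M y \<subseteq> blockers M v T"
    unfolding blockers_def using xy disjoint by auto
  moreover have "finite (blockers M v T)" using sub finite_subset by blast
  ultimately show "6 \<le> card (blockers M v T)" by (metis card_mono)
qed

lemma card_other_triples_le: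
  assumes M: "M \<in> matchings" and v: "v \<in> {1..n}"
  shows "2 * card {T\<in>S. v \<in> T \<and> T \<noteq> triple_of M v} + 3 \<le> n"
proof -
  have "{T\<in>S. v \<in> T} = insert (triple_of M v) {T\<in>S. v \<in> T \<and> T \<noteq> triple_of M v}"
    using triple_of_in_S[OF M v] mem_triple_of[OF M v] by auto
  then have "card {T\<in>S. v \<in> T} = card {T\<in>S. v \<in> T \<and> T \<noteq> triple_of M v} + 1"
    using finite_S by simp
  then show ?thesis using degree_le[OF v] by simp
qed

lemma triple_of_eq_if_revealed:
  assumes M: "M \<in> matchings" and b: "b \<in> matchings" and v: "v \<in> {1..n}"
    and agree: "\<forall>u\<in>{1..n}. \<kappa> u < \<kappa> v \<longrightarrow> triple_of b u = triple_of M u"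
    and x: "x \<in> triple_of b v" and w: "w \<in> triple_of M x" "w \<in> {1..n}" "\<kappa> w < \<kappa> v"
  shows "triple_of b v = triple_of M x"
proof -
  have xV: "x \<in> {1..n}" using x triple_of_subset[OF b v] by blast
  have Mw: "triple_of M w = triple_of M x" by (rule triple_of_eq[OF M xV w(1)])
  have bw: "triple_of b w = triple_of M w" using agree w(2,3) by blast
  have "triple_of b v = triple_of b x" using triple_of_eq[OF b v x] by simp
  also have "\<dots> = triple_of b w"
    using triple_of_eq[OF b w(2)] mem_triple_of[OF M xV] bw Mw by simp
  also have "\<dots> = triple_of M x" using bw Mw by simp
  finally show ?thesis .
qed

lemma consistent_triples_subset:
  assumes M: "M \<in> matchings" and v: "v \<in> {1..n}" and inj: "inj_on \<kappa> {1..n}"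
  shows "(\<lambda>b. triple_of b v) ` agree_on {u\<in>{1..n}. \<kappa> u < \<kappa> v} (\<lambda>u M. triple_of M u) matchings M
    \<subseteq> (if first_in_triple \<kappa> M v then insert (triple_of M v) (available \<kappa> M v) else {triple_of M v})"
proof
  fix T assume "T \<in> (\<lambda>b. triple_of b v) ` agree_on {u\<in>{1..n}. \<kappa> u < \<kappa> v} (\<lambda>u M. triple_of M u) matchings M"
  then obtain b where b: "b \<in> matchings" "T = triple_of b v"
    and agree: "\<forall>u\<in>{1..n}. \<kappa> u < \<kappa> v \<longrightarrow> triple_of b u = triple_of M u"
    unfolding agree_on_def by auto
  note revealed = triple_of_eq_if_revealed[OF M b(1) v agree]
  have earlier: "\<kappa> u < \<kappa> v" if "u \<in> {1..n}" "u \<noteq> v" "\<not> \<kappa> v < \<kappa> u" for u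
    using inj_onD[OF inj _ that(1) v] that(2,3) by (metis linorder_neqE)
  show "T \<in> (if first_in_triple \<kappa> M v then insert (triple_of M v) (available \<kappa> M v) else {triple_of M v})"
  proof (cases "first_in_triple \<kappa> M v")
    case False
    then obtain u where u: "u \<in> triple_of M v" "u \<noteq> v" "\<not> \<kappa> v < \<kappa> u"
      unfolding first_in_triple_def by auto
    have "u \<in> {1..n}" using u(1) triple_of_subset[OF M v] by blast
    then have "T = triple_of M v"
      using revealed[OF _ u(1)] earlier u mem_triple_of[OF b(1) v] b(2) by blast
    then show ?thesis using False by simp
  next
    case True
    have "\<kappa> v < \<kappa> w" if "T \<noteq> triple_of M v" "w \<in> blockers M v T" for w
    proof (rule ccontr)
      assume "\<not> \<kappa> v < \<kappa> w"
      from that(2) obtain x where x: "x \<in> T" "w \<in> triple_of M x" "w \<notin> triple_of M v"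
        unfolding blockers_def by auto
      have "x \<in> {1..n}" using x(1) b triple_of_subset[OF b(1) v] by blast
      then have "w \<in> {1..n}" using x(2) triple_of_subset[OF M] by blast
      moreover have "w \<noteq> v" using x(3) mem_triple_of[OF M v] by auto
      ultimately have "T = triple_of M x"
        using revealed x(1,2) b(2) earlier \<open>\<not> \<kappa> v < \<kappa> w\<close> by blast
      then have "triple_of M v = triple_of M x"
        using triple_of_eq[OF M \<open>x \<in> {1..n}\<close>] mem_triple_of[OF b(1) v] b(2) by simp
      then show False using x(2,3) by simp
    qed
    then show ?thesis
      using True b triple_of_in_S[OF b(1) v] mem_triple_of[OF b(1) v]
      unfolding available_def by auto
  qed
qed

end

section \<open>Random times for the vertices\<close>

context sts
begin

definition times :: "nat \<Rightarrow> (nat \<Rightarrow> nat) set" where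
  "times K = PiE {1..n} (\<lambda>_. {0..<K})"

definition rank :: "(nat \<Rightarrow> nat) \<Rightarrow> nat \<Rightarrow> nat" where
  "rank t u = t u * (n + 1) + u"

lemma inj_on_rank: "inj_on (rank t) {1..n}"
proof (rule inj_onI)
  fix u w assume "u \<in> {1..n}" "w \<in> {1..n}" "rank t u = rank t w"
  then show "u = w"
    unfolding rank_def by (metis mod_less mod_mult_self3 atLeastAtMost_iff le_imp_less_Suc Suc_eq_plus1)
qed

lemma rank_less_imp_le: "u \<in> {1..n} \<Longrightarrow> w \<in> {1..n} \<Longrightarrow> rank t u < rank t w \<Longrightarrow> t u \<le> t w"
  unfolding rank_def by (rule mult_add_less_imp_le) auto

definition first_slots :: "nat \<Rightarrow> nat set set \<Rightarrow> nat \<Rightarrow> nat \<Rightarrow> nat \<Rightarrow> nat set" where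
  "first_slots K M v \<alpha> x =
     (if x = v then {\<alpha>}
      else if x \<in> triple_of M v then {y. y < K \<and> \<alpha> * (n + 1) + v < y * (n + 1) + x}
      else {0..<K})"

lemma times_first_eq:
  assumes M: "M \<in> matchings" and v: "v \<in> {1..n}" and \<alpha>: "\<alpha> < K"
  shows "{t\<in>times K. first_in_triple (rank t) M v \<and> t v = \<alpha>} = PiE {1..n} (first_slots K M v \<alpha>)"
proof (intro set_eqI iffI)
  fix t assume "t \<in> {t\<in>times K. first_in_triple (rank t) M v \<and> t v = \<alpha>}"
  then have t: "t \<in> PiE {1..n} (\<lambda>_. {0..<K})" "first_in_triple (rank t) M v" "t v = \<alpha>"
    unfolding times_def by auto
  show "t \<in> PiE {1..n} (first_slots K M v \<alpha>)"
  proof (rule PiE_I)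
    fix x assume "x \<in> {1..n}"
    then show "t x \<in> first_slots K M v \<alpha> x"
      using t unfolding first_slots_def first_in_triple_def rank_def by auto
  qed (use t(1) in auto)
next
  fix t assume t: "t \<in> PiE {1..n} (first_slots K M v \<alpha>)"
  then have tv: "t v = \<alpha>" using PiE_mem[OF t v] unfolding first_slots_def by simp
  have "t \<in> times K" unfolding times_def
  proof (rule PiE_I)
    fix x assume "x \<in> {1..n}"
    then show "t x \<in> {0..<K}"
      using PiE_mem[OF t \<open>x \<in> {1..n}\<close>] \<alpha> unfolding first_slots_def by (auto split: if_splits)
  qed (use t in auto)
  moreover have "first_in_triple (rank t) M v"
    unfolding first_in_triple_def
  proof (intro ballI impI)
    fix u assume u: "u \<in> triple_of M v" "u \<noteq> v"
    then have "t u \<in> first_slots K M v \<alpha> u" using PiE_mem[OF t] triple_of_subset[OF M v] by auto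
    then show "rank t v < rank t u" unfolding first_slots_def rank_def using u tv by simp
  qed
  ultimately show "t \<in> {t\<in>times K. first_in_triple (rank t) M v \<and> t v = \<alpha>}" using tv by simp
qed

lemma finite_first_slots: "finite (PiE {1..n} (first_slots K M v \<alpha>))"
  by (rule finite_PiE) (auto simp: first_slots_def)

lemma card_first_slots_le:
  assumes M: "M \<in> matchings" and v: "v \<in> {1..n}"
  shows "card (PiE {1..n} (first_slots K M v \<alpha>)) \<le> (K - \<alpha>)^2 * K^(n - 3)"
proof -
  let ?e = "triple_of M v"
  have e: "?e \<subseteq> {1..n}" "v \<in> ?e" "card ?e = 3" "finite ?e"
    using triple_of_subset[OF M v] mem_triple_of[OF M v] card_triple[OF triple_of_in_S[OF M v]]
      finite_subset[of ?e "{1..n}"] by auto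
  define h where "h x = (if x = v then 1 else if x \<in> ?e then K - \<alpha> else K)" for x
  have "card (first_slots K M v \<alpha> x) \<le> h x" if "x \<in> {1..n}" for x
  proof -
    have "{y. y < K \<and> \<alpha> * (n + 1) + v < y * (n + 1) + x} \<subseteq> {\<alpha>..<K}"
      using mult_add_less_imp_le[of v n x \<alpha>] that v by auto
    then show ?thesis
      unfolding first_slots_def h_def using card_mono[of "{\<alpha>..<K}"] by auto
  qed
  then have "card (PiE {1..n} (first_slots K M v \<alpha>)) \<le> (\<Prod>x\<in>{1..n}. h x)"
    unfolding card_PiE[OF finite_atLeastAtMost] by (intro prod_mono) auto
  also have "\<dots> = (\<Prod>x\<in>{1..n} - ?e. h x) * (\<Prod>x\<in>?e. h x)"
    by (rule prod.subset_diff[OF e(1)]) simp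
  also have "(\<Prod>x\<in>?e. h x) = h v * (\<Prod>x\<in>?e - {v}. h x)"
    by (rule prod.remove[OF e(4,2)])
  also have "(\<Prod>x\<in>{1..n} - ?e. h x) = K ^ (n - 3)"
  proof -
    have "(\<Prod>x\<in>{1..n} - ?e. h x) = (\<Prod>x\<in>{1..n} - ?e. K)"
      by (rule prod.cong) (use e(2) in \<open>auto simp: h_def\<close>)
    then show ?thesis using e by (simp add: card_Diff_subset)
  qed
  also have "(\<Prod>x\<in>?e - {v}. h x) = (K - \<alpha>) ^ 2"
  proof -
    have "(\<Prod>x\<in>?e - {v}. h x) = (\<Prod>x\<in>?e - {v}. K - \<alpha>)"
      by (rule prod.cong) (auto simp: h_def)
    then show ?thesis using e by simp
  qed
  finally show ?thesis by (simp add: h_def mult.commute)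
qed

lemma card_blockers_later_le:
  assumes M: "M \<in> matchings" and v: "v \<in> {1..n}" and \<alpha>: "\<alpha> < K"
    and T: "T \<in> S" "v \<in> T" "T \<noteq> triple_of M v"
  defines "G \<equiv> PiE {1..n} (first_slots K M v \<alpha>)"
  shows "real (card {t\<in>G. \<forall>w\<in>blockers M v T. rank t v < rank t w})
       \<le> real (card G) * (real (K - \<alpha>) / real K) ^ 6"
proof -
  note W = blockers_props[OF M v T]
  have "{t\<in>G. \<forall>w\<in>blockers M v T. rank t v < rank t w} \<subseteq> {t\<in>G. \<forall>w\<in>blockers M v T. \<alpha> \<le> t w}"
  proof safe
    fix t w assume t: "t \<in> G" "\<forall>w\<in>blockers M v T. rank t v < rank t w" and w: "w \<in> blockers M v T"
    have "t v = \<alpha>" using PiE_mem[OF t(1)[unfolded G_def] v] by (simp add: first_slots_def)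
    then show "\<alpha> \<le> t w" using rank_less_imp_le[OF v, of w t] W(1) w t(2) by auto
  qed
  then have "real (card {t\<in>G. \<forall>w\<in>blockers M v T. rank t v < rank t w})
      \<le> real (card {t\<in>G. \<forall>w\<in>blockers M v T. \<alpha> \<le> t w})"
    using finite_first_slots unfolding G_def by (intro of_nat_mono card_mono) auto
  also have "\<dots> = real (card G) * (real (K - \<alpha>) / real K) ^ card (blockers M v T)"
    unfolding G_def using W(1,2) mem_triple_of[OF M v] \<alpha>
    by (intro card_PiE_filter_ge) (auto simp: first_slots_def)
  also have "\<dots> \<le> real (card G) * (real (K - \<alpha>) / real K) ^ 6"
    using W(3) \<alpha> by (intro mult_left_mono power_decreasing) auto
  finally show ?thesis .
qed

lemma sum_card_available_le:
  assumes M: "M \<in> matchings" and v: "v \<in> {1..n}" and \<alpha>: "\<alpha> < K"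
  defines "G \<equiv> PiE {1..n} (first_slots K M v \<alpha>)"
    and "c \<equiv> real (card {T\<in>S. v \<in> T \<and> T \<noteq> triple_of M v})"
  shows "(\<Sum>t\<in>G. 1 + real (card (available (rank t) M v)))
    \<le> real (card G) * (1 + c * (real (K - \<alpha>) / real K) ^ 6)"
proof -
  let ?Sv = "{T\<in>S. v \<in> T \<and> T \<noteq> triple_of M v}"
  let ?P = "\<lambda>t T. \<forall>w\<in>blockers M v T. rank t v < rank t w"
  have finG: "finite G" unfolding G_def by (rule finite_first_slots)
  have "real (card (available (rank t) M v)) = (\<Sum>T\<in>?Sv. if ?P t T then 1 else 0)" for t
  proof -
    have "available (rank t) M v = {T\<in>?Sv. ?P t T}" unfolding available_def by blast
    moreover have "finite ?Sv" using finite_S by simp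
    ultimately show ?thesis by (simp only: real_card_filter_eq_sum)
  qed
  then have "(\<Sum>t\<in>G. 1 + real (card (available (rank t) M v)))
      = real (card G) + (\<Sum>T\<in>?Sv. \<Sum>t\<in>G. if ?P t T then 1 else 0)"
    by (simp add: sum.distrib sum.swap[of _ G])
  also have "\<dots> = real (card G) + (\<Sum>T\<in>?Sv. real (card {t\<in>G. ?P t T}))"
    using finG by (simp add: real_card_filter_eq_sum)
  also have "\<dots> \<le> real (card G) + (\<Sum>T\<in>?Sv. real (card G) * (real (K - \<alpha>) / real K) ^ 6)"
    using card_blockers_later_le[OF M v \<alpha>] unfolding G_def by (intro add_left_mono sum_mono) auto
  also have "\<dots> = real (card G) * (1 + c * (real (K - \<alpha>) / real K) ^ 6)"
    unfolding c_def by (simp add: algebra_simps)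
  finally show ?thesis .
qed


lemma sum_ln_available_le:
  assumes M: "M \<in> matchings" and v: "v \<in> {1..n}"
  shows "(\<Sum>t\<in>times K. if first_in_triple (rank t) M v
                         then ln (1 + real (card (available (rank t) M v))) else 0)
    \<le> (\<Sum>\<alpha><K. real ((K - \<alpha>)^2 * K^(n - 3)) * ln (1 + real n / 2 * (real (K - \<alpha>) / real K) ^ 6))"
proof -
  let ?f = "\<lambda>t. ln (1 + real (card (available (rank t) M v)))"
  let ?first = "{t\<in>times K. first_in_triple (rank t) M v}"
  have fin: "finite (times K)" unfolding times_def by (rule finite_PiE) auto
  have c: "real (card {T\<in>S. v \<in> T \<and> T \<noteq> triple_of M v}) \<le> real n / 2"
    using card_other_triples_le[OF M v] by simp
  have "(\<Sum>t\<in>times K. if first_in_triple (rank t) M v then ?f t else 0) = (\<Sum>t\<in>?first. ?f t)"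
    by (rule sum.inter_filter[OF fin, symmetric])
  also have "\<dots> = (\<Sum>\<alpha><K. \<Sum>t\<in>{t\<in>?first. t v = \<alpha>}. ?f t)"
    by (rule sum.group[symmetric]) (use fin v in \<open>auto simp: times_def\<close>)
  also have "\<dots> \<le> (\<Sum>\<alpha><K. real ((K - \<alpha>)^2 * K^(n - 3)) * ln (1 + real n / 2 * (real (K - \<alpha>) / real K) ^ 6))"
  proof (rule sum_mono)
    fix \<alpha> assume "\<alpha> \<in> {..<K}"
    then have \<alpha>: "\<alpha> < K" by simp
    define G where "G = PiE {1..n} (first_slots K M v \<alpha>)"
    define m where "m = 1 + real n / 2 * (real (K - \<alpha>) / real K) ^ 6"
    have m: "1 \<le> m" unfolding m_def by simp
    have "{t\<in>?first. t v = \<alpha>} = G"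
      using times_first_eq[OF M v \<alpha>] unfolding G_def by auto
    moreover have "(\<Sum>t\<in>G. ?f t) \<le> real (card G) * ln m"
    proof (rule sum_ln_le_card_mul_ln_mean)
      have "(\<Sum>t\<in>G. 1 + real (card (available (rank t) M v)))
          \<le> real (card G) * (1 + real (card {T\<in>S. v \<in> T \<and> T \<noteq> triple_of M v}) * (real (K - \<alpha>) / real K) ^ 6)"
        unfolding G_def by (rule sum_card_available_le[OF M v \<alpha>])
      also have "\<dots> \<le> real (card G) * m"
        unfolding m_def using c by (intro mult_left_mono add_left_mono mult_right_mono) auto
      finally show "(\<Sum>t\<in>G. 1 + real (card (available (rank t) M v))) \<le> real (card G) * m" .
    qed (use m finite_first_slots in \<open>auto simp: G_def add_pos_nonneg\<close>)
    moreover have "real (card G) * ln m \<le> real ((K - \<alpha>)^2 * K^(n - 3)) * ln m"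
      unfolding G_def using card_first_slots_le[OF M v] m by (intro mult_right_mono of_nat_mono) auto
    ultimately show "(\<Sum>t\<in>{t\<in>?first. t v = \<alpha>}. ?f t)
        \<le> real ((K - \<alpha>)^2 * K^(n - 3)) * ln (1 + real n / 2 * (real (K - \<alpha>) / real K) ^ 6)"
      unfolding m_def by simp
  qed
  finally show ?thesis .
qed

lemma card_mul_ln_card_matchings_le:
  "real (card matchings) * ln (real (card matchings))
     \<le> (\<Sum>M\<in>matchings. \<Sum>v\<in>{1..n}. if first_in_triple (rank t) M v
                                   then ln (1 + real (card (available (rank t) M v))) else 0)"
proof -
  let ?B = "\<lambda>M v. agree_on {u\<in>{1..n}. rank t u < rank t v} (\<lambda>u M. triple_of M u) matchings M"
  have "real (card matchings) * ln (real (card matchings))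
      \<le> (\<Sum>M\<in>matchings. \<Sum>v\<in>{1..n}. ln (real (card ((\<lambda>b. triple_of b v) ` ?B M v))))"
    by (rule card_mul_ln_card_le_sum_ln_card_agree_on[where g = "\<lambda>u M. triple_of M u",
          OF finite_matchings finite_atLeastAtMost inj_on_rank])
      (use matching_eq_if_triple_of_eq in blast)
  also have "\<dots> \<le> (\<Sum>M\<in>matchings. \<Sum>v\<in>{1..n}. if first_in_triple (rank t) M v
                                   then ln (1 + real (card (available (rank t) M v))) else 0)"
  proof (intro sum_mono)
    fix M v assume M: "M \<in> matchings" and v: "v \<in> {1..n}"
    have fin: "finite (available (rank t) M v)" using finite_S unfolding available_def by simp
    have "card ((\<lambda>b. triple_of b v) ` ?B M v)
        \<le> card (if first_in_triple (rank t) M v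
                then insert (triple_of M v) (available (rank t) M v) else {triple_of M v})"
      using consistent_triples_subset[OF M v inj_on_rank] fin by (intro card_mono) auto
    also have "\<dots> \<le> (if first_in_triple (rank t) M v then 1 + card (available (rank t) M v) else 1)"
      using fin by (simp add: card_insert_if)
    finally show "ln (real (card ((\<lambda>b. triple_of b v) ` ?B M v)))
        \<le> (if first_in_triple (rank t) M v then ln (1 + real (card (available (rank t) M v))) else 0)"
      by (auto dest: ln_of_nat_mono split: if_splits)
  qed
  finally show ?thesis .
qed

lemma three_le_n: "M \<in> matchings \<Longrightarrow> 1 \<le> n \<Longrightarrow> 3 \<le> n"
  using card_other_triples_le[of M 1] by simp

lemma ln_card_matchings_le:
  assumes ne: "matchings \<noteq> {}" and n: "1 \<le> n" and K: "0 < K"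
  shows "ln (real (card matchings))
    \<le> real n / real K * (\<Sum>\<alpha><K. (real (K - \<alpha>) / real K)^2 * ln (1 + real n / 2 * (real (K - \<alpha>) / real K) ^ 6))"
proof -
  define N where "N = real (card matchings)"
  define L where "L \<alpha> = ln (1 + real n / 2 * (real (K - \<alpha>) / real K) ^ 6)" for \<alpha>
  define F where "F t M v = (if first_in_triple (rank t) M v
                               then ln (1 + real (card (available (rank t) M v))) else 0)" for t M v
  have N: "N > 0" using ne finite_matchings unfolding N_def by (simp add: card_gt_0_iff)
  have "3 \<le> n" using ne three_le_n n by blast
  then obtain k where k: "n = k + 3" by (metis add.commute le_Suc_ex)
  have scale: "real ((K - \<alpha>)^2 * K^(n - 3)) = real K ^ n * ((real (K - \<alpha>) / real K)^2 / real K)" for \<alpha>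
    unfolding k using K by (simp add: field_simps power_add power2_eq_square power3_eq_cube)
  have "real K ^ n * (N * ln N) = (\<Sum>t\<in>times K. N * ln N)"
    by (simp add: times_def card_PiE)
  also have "\<dots> \<le> (\<Sum>t\<in>times K. \<Sum>M\<in>matchings. \<Sum>v\<in>{1..n}. F t M v)"
    unfolding N_def F_def by (intro sum_mono card_mul_ln_card_matchings_le)
  also have "\<dots> = (\<Sum>M\<in>matchings. \<Sum>v\<in>{1..n}. \<Sum>t\<in>times K. F t M v)"
    by (simp add: sum.swap[of _ "times K"] sum.swap[of _ "{1..n}"])
  also have "\<dots> \<le> (\<Sum>M\<in>matchings. \<Sum>v\<in>{1..n}. \<Sum>\<alpha><K. real ((K - \<alpha>)^2 * K^(n - 3)) * L \<alpha>)"
    unfolding F_def L_def by (intro sum_mono sum_ln_available_le)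
  also have "\<dots> = real K ^ n * (N * (real n / real K * (\<Sum>\<alpha><K. (real (K - \<alpha>) / real K)^2 * L \<alpha>)))"
    unfolding scale N_def by (simp add: sum_distrib_left mult_ac)
  finally have "N * ln N \<le> N * (real n / real K * (\<Sum>\<alpha><K. (real (K - \<alpha>) / real K)^2 * L \<alpha>))"
    using K by (simp only: mult_le_cancel_left_pos zero_less_power of_nat_0_less_iff)
  then have "ln N \<le> real n / real K * (\<Sum>\<alpha><K. (real (K - \<alpha>) / real K)^2 * L \<alpha>)"
    using N by (simp only: mult_le_cancel_left_pos)
  then show ?thesis unfolding N_def L_def .
qed

end

section \<open>The Riemann sum\<close>

definition sq_ln_primitive :: "real \<Rightarrow> real" where
  "sq_ln_primitive x = x^3 * ln x / 3 - x^3 / 9"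

lemma sq_ln_le_primitive_diff:
  assumes j: "1 \<le> j"
  shows "j^2 * ln j \<le> sq_ln_primitive (j + 1) - sq_ln_primitive j"
proof -
  define H where "H x = sq_ln_primitive x - x * (j^2 * ln j)" for x
  have "H j \<le> H (j + 1)"
  proof (rule DERIV_nonneg_imp_nondecreasing[of j "j + 1" H])
    fix x assume x: "j \<le> x" "x \<le> j + 1"
    then have "x > 0" using j by simp
    have "(H has_real_derivative (x^2 * ln x - j^2 * ln j)) (at x)"
      unfolding H_def sq_ln_primitive_def
      by (rule derivative_eq_intros refl
          | use \<open>x > 0\<close> in \<open>simp add: field_simps power2_eq_square power3_eq_cube\<close>)+
    moreover have "j^2 * ln j \<le> x^2 * ln x"
      using x j by (intro mult_mono power_mono) auto
    ultimately show "\<exists>y. (H has_real_derivative y) (at x) \<and> 0 \<le> y" by auto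
  qed simp
  then show ?thesis unfolding H_def by (simp add: algebra_simps)
qed

lemma sum_sq_ln_le: "(\<Sum>j=1..n. real j ^ 2 * ln (real j)) \<le> sq_ln_primitive (real n + 1) - sq_ln_primitive 1"
proof (induction n)
  case (Suc n)
  then show ?case using sq_ln_le_primitive_diff[of "real (Suc n)"] by (simp add: add.commute)
qed simp

lemma sum_sq: "(\<Sum>j=1..n. real j ^ 2) = real n * (real n + 1) * (2 * real n + 1) / 6"
  by (induction n) (simp_all add: field_simps power2_eq_square)

lemma sq_mul_ln_ge:
  fixes x :: real
  assumes "0 < x"
  shows "- x \<le> x^2 * ln x"
proof -
  have "1 - 1 / x \<le> ln x" using ln_le_minus_one[of "1 / x"] assms by (simp add: ln_div)
  then have "x^2 * (1 - 1 / x) \<le> x^2 * ln x" by (rule mult_left_mono) simp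
  moreover have "x^2 * (1 - 1 / x) = x^2 - x" using assms by (simp add: field_simps power2_eq_square)
  ultimately show ?thesis by (smt (verit) zero_le_power2)
qed

lemma ln_one_plus_le:
  fixes y :: real
  assumes "0 < y"
  shows "ln (1 + y) \<le> ln y + 1 / y"
proof -
  have "1 + y = y * (1 + 1 / y)" using assms by (simp add: field_simps)
  then have "ln (1 + y) = ln (y * (1 + 1 / y))" by (rule arg_cong)
  also have "\<dots> = ln y + ln (1 + 1 / y)"
    using assms add_pos_pos[of 1 "1 / y"] by (simp add: ln_mult)
  also have "ln (1 + 1 / y) \<le> 1 / y" using assms by (intro ln_add_one_self_le_self) simp
  finally show ?thesis by simp
qed

text \<open>For \<open>x \<ge> \<epsilon>\<close> the \<open>1\<close> inside the logarithm costs
  at most \<open>1 / (c x\<^sup>6)\<close>, and the range \<open>x < \<epsilon>\<close> is small.\<close>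

lemma sq_mul_ln_one_plus_le:
  fixes x c \<epsilon> :: real
  assumes x: "0 < x" "x \<le> 1" and c: "0 < c" and \<epsilon>: "0 < \<epsilon>" "\<epsilon> \<le> 1"
  shows "x^2 * ln (1 + c * x^6) \<le> x^2 * ln c + 6 * (x^2 * ln x) + (6 * \<epsilon> + 1 / c + 1 / (c * \<epsilon>^6))"
proof (cases "\<epsilon> \<le> x")
  case True
  have cx: "c * x^6 > 0" using c x by simp
  have "ln (1 + c * x^6) \<le> ln c + 6 * ln x + 1 / (c * x^6)"
    using ln_one_plus_le[OF cx] c x by (simp add: ln_mult ln_realpow)
  then have "x^2 * ln (1 + c * x^6) \<le> x^2 * (ln c + 6 * ln x + 1 / (c * x^6))"
    by (intro mult_left_mono) auto
  also have "\<dots> = x^2 * ln c + 6 * (x^2 * ln x) + 1 / (c * x^4)"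
    using x c by (simp add: field_simps power_add[symmetric])
  also have "1 / (c * x^4) \<le> 1 / (c * \<epsilon>^6)"
  proof -
    have "\<epsilon>^6 \<le> \<epsilon>^4" using \<epsilon> by (intro power_decreasing) auto
    also have "\<epsilon>^4 \<le> x^4" using \<epsilon> True by (intro power_mono) auto
    finally show ?thesis using c \<epsilon> by (intro divide_left_mono mult_left_mono mult_pos_pos) auto
  qed
  finally show ?thesis using \<epsilon> c by (smt (verit) divide_pos_pos)
next
  case False
  have "ln (1 + c * x^6) \<le> ln (1 + c)"
    using x c power_le_one[of x 6] by (intro ln_mono) (auto intro: add_pos_nonneg mult_left_le)
  also have "\<dots> \<le> ln c + 1 / c" by (rule ln_one_plus_le[OF c])
  finally have "x^2 * ln (1 + c * x^6) \<le> x^2 * (ln c + 1 / c)"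
    by (rule mult_left_mono) simp
  also have "\<dots> = x^2 * ln c + x^2 / c" by (simp add: algebra_simps)
  also have "x^2 / c \<le> 1 / c"
    using x c power_le_one[of x 2] by (intro divide_right_mono) auto
  finally have "x^2 * ln (1 + c * x^6) \<le> x^2 * ln c + 1 / c" by simp
  moreover have "- 6 * \<epsilon> \<le> 6 * (x^2 * ln x)" using sq_mul_ln_ge[OF x(1)] False by linarith
  moreover have "0 \<le> 1 / (c * \<epsilon>^6)" using c \<epsilon> by simp
  ultimately show ?thesis by linarith
qed

definition phi :: "nat \<Rightarrow> real" where
  "phi n = (\<Sum>j=1..n. (real j / real n)^2 * ln (1 + real n / 2 * (real j / real n) ^ 6))"

text \<open>The Riemann-sum error in approximating \<open>3 phi n / n\<close> by
  \<open>\<integral>\<^sub>0\<^sup>1 3 x\<^sup>2 (ln (n/2) + 6 ln x) dx = ln (n/2) - 2\<close>.\<close>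

definition riemann_error :: "nat \<Rightarrow> real" where
  "riemann_error n =
     3 * ln (real n / 2) * (real n * (real n + 1) * (2 * real n + 1) / 6) / real n ^ 3 - ln (real n / 2)
     + 18 / real n ^ 3 * (sq_ln_primitive (real n + 1) - sq_ln_primitive 1
                         - ln (real n) * (real n * (real n + 1) * (2 * real n + 1) / 6)) + 2"

lemma phi_le:
  assumes n: "1 \<le> n" and \<epsilon>: "0 < \<epsilon>" "\<epsilon> \<le> 1"
  shows "3 * phi n / real n
    \<le> ln (real n / 2) - 2 + riemann_error n + 18 * \<epsilon> + 6 / real n + 6 / (real n * \<epsilon>^6)"
proof -
  define c where "c = real n / 2"
  define E where "E = 6 * \<epsilon> + 1 / c + 1 / (c * \<epsilon>^6)"
  define a where "a = (ln c - 6 * ln (real n)) / real n ^ 2"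
  define Q where "Q = real n * (real n + 1) * (2 * real n + 1) / 6"
  have c: "0 < c" and nr: "0 < real n" unfolding c_def using n by auto
  have "(real j / real n)^2 * ln (1 + c * (real j / real n) ^ 6)
      \<le> a * real j ^ 2 + 6 / real n ^ 2 * (real j ^ 2 * ln (real j)) + E"
    if j: "j \<in> {1..n}" for j
  proof -
    have x: "0 < real j / real n" "real j / real n \<le> 1" using j nr by auto
    have "(real j / real n)^2 * ln (real j / real n)
        = (real j ^ 2 * ln (real j) - real j ^ 2 * ln (real n)) / real n ^ 2"
      using j nr by (simp add: ln_div power_divide field_simps)
    then show ?thesis
      using sq_mul_ln_one_plus_le[OF x c \<epsilon>] nr
      unfolding E_def a_def by (simp add: power_divide field_simps)
  qed
  then have "phi n \<le> (\<Sum>j=1..n. a * real j ^ 2 + 6 / real n ^ 2 * (real j ^ 2 * ln (real j)) + E)"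
    unfolding phi_def c_def[symmetric] by (rule sum_mono)
  also have "\<dots> = a * Q + 6 / real n ^ 2 * (\<Sum>j=1..n. real j ^ 2 * ln (real j)) + real n * E"
    unfolding Q_def sum_sq[symmetric] by (simp add: sum.distrib sum_distrib_left)
  also have "\<dots> \<le> a * Q + 6 / real n ^ 2 * (sq_ln_primitive (real n + 1) - sq_ln_primitive 1) + real n * E"
    using sum_sq_ln_le[of n] by (intro add_right_mono add_left_mono mult_left_mono) auto
  finally have "3 / real n * phi n
      \<le> 3 / real n * (a * Q + 6 / real n ^ 2 * (sq_ln_primitive (real n + 1) - sq_ln_primitive 1) + real n * E)"
    using nr by (intro mult_left_mono) auto
  also have "\<dots> = ln c - 2 + riemann_error n + 3 * E"
    unfolding riemann_error_def a_def Q_def c_def using nr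
    by (simp add: field_simps power2_eq_square power3_eq_cube)
  also have "3 * E = 18 * \<epsilon> + 6 / real n + 6 / (real n * \<epsilon>^6)"
    unfolding E_def c_def using nr \<epsilon> by (simp add: field_simps)
  finally show ?thesis unfolding c_def by simp
qed

lemma riemann_error_bound_tendsto_zero:
  "(\<lambda>n. riemann_error n + 18 * real n powr (-1/12) + 6 / real n + 6 / (real n * (real n powr (-1/12))^6))
     \<longlonglongrightarrow> 0"
  unfolding riemann_error_def sq_ln_primitive_def by real_asymp

lemma phi_eq_sum_lessThan:
  "phi n = (\<Sum>\<alpha><n. (real (n - \<alpha>) / real n)^2 * ln (1 + real n / 2 * (real (n - \<alpha>) / real n) ^ 6))"
proof -
  define f where "f j = (real j / real n)^2 * ln (1 + real n / 2 * (real j / real n) ^ 6)" for j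
  have "(\<Sum>\<alpha><n. f (n - \<alpha>)) = (\<Sum>\<alpha><n. f (Suc (n - Suc \<alpha>)))"
    by (rule sum.cong[OF refl]) (simp add: Suc_diff_Suc)
  also have "\<dots> = (\<Sum>i<n. f (Suc i))" by (rule sum.nat_diff_reindex)
  also have "\<dots> = phi n" unfolding phi_def f_def by (simp add: sum.atLeast1_atMost_eq)
  finally show ?thesis unfolding f_def by simp
qed

definition eta :: "nat \<Rightarrow> real" where
  "eta n = max 0 (exp (3 * phi n / real n - ln (real n / 2) + 2) - 1)"

lemma eta_tendsto_zero: "eta \<longlonglongrightarrow> 0"
proof -
  define U where "U n = riemann_error n + 18 * real n powr (-1/12) + 6 / real n
    + 6 / (real n * (real n powr (-1/12))^6)" for n
  have bound: "eta n \<le> max 0 (exp (U n) - 1)" if n: "1 \<le> n" for n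
  proof -
    have \<epsilon>: "0 < real n powr (-1/12)" "real n powr (-1/12) \<le> 1"
      using n powr_mono2'[of "-1/12" 1 "real n"] by auto
    have "3 * phi n / real n - ln (real n / 2) + 2 \<le> U n"
      using phi_le[OF n \<epsilon>] unfolding U_def by linarith
    then show ?thesis unfolding eta_def by (intro max.mono order_refl diff_right_mono) simp
  qed
  have "(\<lambda>n. max 0 (exp (U n) - 1)) \<longlonglongrightarrow> max 0 (exp 0 - 1)"
    unfolding U_def by (intro tendsto_intros riemann_error_bound_tendsto_zero)
  then have lim: "(\<lambda>n. max 0 (exp (U n) - 1)) \<longlonglongrightarrow> 0" by simp
  show ?thesis
  proof (rule tendsto_sandwich[of "\<lambda>_. 0" _ _ "\<lambda>n. max 0 (exp (U n) - 1)"])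
    show "\<forall>\<^sub>F n in sequentially. 0 \<le> eta n" unfolding eta_def by simp
    show "\<forall>\<^sub>F n in sequentially. eta n \<le> max 0 (exp (U n) - 1)"
      using bound by (intro eventually_sequentiallyI[of 1])
  qed (use lim in simp_all)
qed

context sts
begin

lemma card_matchings_le:
  assumes n: "1 \<le> n"
  shows "real (card matchings) \<le> ((1 + eta n) * real n / (2 * exp 2)) powr (real n / 3)"
proof (cases "matchings = {}")
  case False
  have nr: "0 < real n" using n by simp
  define y where "y = 3 * phi n / real n"
  have "exp y = real n / (2 * exp 2) * exp (y - ln (real n / 2) + 2)"
    using nr by (simp add: exp_add exp_diff)
  also have "\<dots> \<le> real n / (2 * exp 2) * (1 + eta n)"
    unfolding eta_def y_def using nr by (intro mult_left_mono) auto
  finally have y: "exp y \<le> (1 + eta n) * real n / (2 * exp 2)" by (simp add: mult.commute)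
  have "0 < real (card matchings)" using False finite_matchings by (simp add: card_gt_0_iff)
  moreover have "ln (real (card matchings)) \<le> phi n"
    using ln_card_matchings_le[OF False n, of n] n by (simp add: phi_eq_sum_lessThan)
  ultimately have "real (card matchings) \<le> exp (phi n)"
    by (metis exp_le_cancel_iff exp_ln)
  also have "\<dots> = exp y powr (real n / 3)"
    unfolding powr_def y_def using nr by simp
  also have "\<dots> \<le> ((1 + eta n) * real n / (2 * exp 2)) powr (real n / 3)"
    using y nr by (intro powr_mono2) auto
  finally show ?thesis .
qed simp

end

theorem theorem1p2:
  shows "\<exists>\<eta> :: nat \<Rightarrow> real. \<eta> \<longlonglongrightarrow> 0 \<and>
    (\<forall>n S. n \<ge> 1 \<longrightarrow> steiner_triple_system n S \<longrightarrow>
       real (card {M. perfect_matching {1..n} S M})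
         \<le> ((1 + \<eta> n) * real n / (2 * exp 2)) powr (real n / 3))"
proof (intro exI conjI allI impI)
  show "eta \<longlonglongrightarrow> 0" by (rule eta_tendsto_zero)
next
  fix n S assume "n \<ge> 1" and "steiner_triple_system n S"
  then interpret sts n S by unfold_locales
  show "real (card {M. perfect_matching {1..n} S M}) \<le> ((1 + eta n) * real n / (2 * exp 2)) powr (real n / 3)"
    using card_matchings_le[OF \<open>n \<ge> 1\<close>] unfolding matchings_def .
qed

end
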